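(* Let $n\geq 3$ and let $N=(V,A)$ be a proper binary level-1 network on $n$ leaves. Then $2n+1\leq |V|\leq 3n-2$ and $2n+1\leq |A|\leq 3.5(n-1)$. Moreover, if $n=3$ then $|V|=|A|=7$ (so all four bounds are attained) and $N$ is a simple network.
   Context: A leaf of a directed acyclic graph (DAG) is a vertex of in-degree 1 and out-degree 0. For a finite set $X$, a phylogenetic network on $X$ is a DAG (no loops, no multiple arcs) with a unique vertex $\rho_N$ (the root) of in-degree 0, which has out-degree at least 2, whose set of leaves is $X$, and in which every vertex other than the root and the leaves is either a split vertex (in-degree 1, out-degree $\geq 2$) or a hybrid vertex (in-degree $\geq 2$, out-degree $\geq 1$). It is binary if the root and all split vertices have out-degree 2 and every hybrid vertex has in-degree 2 and out-degree 1. $U(N)$ denotes the underlying undirected graph. A binary level-1 network is a binary phylogenetic network in which every biconnected component of $U(N)$ contains at most one hybrid vertex; by standing convention every cycle of $U(N)$ has at least four vertices. A gall of a level-1 network is a biconnected component of $U(N)$ with more than one edge (with the arc directions of $N$). A level-1 network is proper if it has at least one hybrid vertex (equivalently at least one gall). A binary level-1 network is simple if it has exactly one gall and every leaf is adjacent to a vertex of that gall. *)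

theory Defs
  imports Complex_Main
begin

text \<open>A directed graph is given by a vertex set V and an arc set A \<subseteq> V \<times> V
  (a set of pairs, so there are no multiple arcs).\<close>

definition indeg :: "('a \<times> 'a) set \<Rightarrow> 'a \<Rightarrow> nat" where
  "indeg A v = card {u. (u, v) \<in> A}"

definition outdeg :: "('a \<times> 'a) set \<Rightarrow> 'a \<Rightarrow> nat" where
  "outdeg A v = card {w. (v, w) \<in> A}"

definition dag :: "'a set \<Rightarrow> ('a \<times> 'a) set \<Rightarrow> bool" where
  "dag V A \<longleftrightarrow> finite V \<and> A \<subseteq> V \<times> V \<and> (\<forall>v. (v, v) \<notin> A\<^sup>+)"

definition leaves :: "'a set \<Rightarrow> ('a \<times> 'a) set \<Rightarrow> 'a set" where
  "leaves V A = {v \<in> V. indeg A v = 1 \<and> outdeg A v = 0}"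

definition is_root :: "'a set \<Rightarrow> ('a \<times> 'a) set \<Rightarrow> 'a \<Rightarrow> bool" where
  "is_root V A r \<longleftrightarrow> r \<in> V \<and> indeg A r = 0"

definition split_vertex :: "('a \<times> 'a) set \<Rightarrow> 'a \<Rightarrow> bool" where
  "split_vertex A v \<longleftrightarrow> indeg A v = 1 \<and> outdeg A v \<ge> 2"

definition hybrid_vertex :: "('a \<times> 'a) set \<Rightarrow> 'a \<Rightarrow> bool" where
  "hybrid_vertex A v \<longleftrightarrow> indeg A v \<ge> 2 \<and> outdeg A v \<ge> 1"

definition phylo_network :: "'a set \<Rightarrow> ('a \<times> 'a) set \<Rightarrow> 'a set \<Rightarrow> bool" where
  "phylo_network V A X \<longleftrightarrow>
     dag V A \<and>
     (\<exists>!r. is_root V A r) \<and>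
     (\<forall>r. is_root V A r \<longrightarrow> outdeg A r \<ge> 2) \<and>
     leaves V A = X \<and>
     (\<forall>v\<in>V. is_root V A v \<or> v \<in> X \<or> split_vertex A v \<or> hybrid_vertex A v)"

definition binary_network :: "'a set \<Rightarrow> ('a \<times> 'a) set \<Rightarrow> 'a set \<Rightarrow> bool" where
  "binary_network V A X \<longleftrightarrow>
     phylo_network V A X \<and>
     (\<forall>v\<in>V. (is_root V A v \<longrightarrow> outdeg A v = 2) \<and>
             (split_vertex A v \<longrightarrow> outdeg A v = 2) \<and>
             (hybrid_vertex A v \<longrightarrow> indeg A v = 2 \<and> outdeg A v = 1))"

definition uedges_on :: "('a \<times> 'a) set \<Rightarrow> 'a set \<Rightarrow> ('a \<times> 'a) set" where
  "uedges_on A S = {(u, v). u \<in> S \<and> v \<in> S \<and> ((u, v) \<in> A \<or> (v, u) \<in> A)}"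

definition uconnected_on :: "('a \<times> 'a) set \<Rightarrow> 'a set \<Rightarrow> bool" where
  "uconnected_on A S \<longleftrightarrow> S \<noteq> {} \<and> (\<forall>u\<in>S. \<forall>v\<in>S. (u, v) \<in> (uedges_on A S)\<^sup>*)"

text \<open>A vertex set S spans a biconnected (induced) subgraph of U(N): at least two
  vertices, connected, and it stays connected after deleting any single vertex
  (so a single edge counts as biconnected).\<close>
definition ubiconnected :: "'a set \<Rightarrow> ('a \<times> 'a) set \<Rightarrow> 'a set \<Rightarrow> bool" where
  "ubiconnected V A S \<longleftrightarrow> S \<subseteq> V \<and> finite S \<and> card S \<ge> 2 \<and> uconnected_on A S \<and>
     (\<forall>x\<in>S. uconnected_on A (S - {x}))"

text \<open>Biconnected components (blocks) of U(N): maximal biconnected subgraphs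
  (which are induced, hence determined by their vertex sets).\<close>
definition bicomponent :: "'a set \<Rightarrow> ('a \<times> 'a) set \<Rightarrow> 'a set \<Rightarrow> bool" where
  "bicomponent V A S \<longleftrightarrow> ubiconnected V A S \<and>
     (\<forall>T. ubiconnected V A T \<and> S \<subseteq> T \<longrightarrow> T = S)"

text \<open>No cycle of U(N) with fewer than four vertices, i.e. no triangle
  (U(N) is a simple graph, so cycles have at least three vertices).\<close>
definition no_short_cycle :: "('a \<times> 'a) set \<Rightarrow> bool" where
  "no_short_cycle A \<longleftrightarrow>
     \<not> (\<exists>a b c. a \<noteq> b \<and> b \<noteq> c \<and> a \<noteq> c \<and>
        (a, b) \<in> uedges_on A UNIV \<and> (b, c) \<in> uedges_on A UNIV \<and> (a, c) \<in> uedges_on A UNIV)"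

definition binary_level1 :: "'a set \<Rightarrow> ('a \<times> 'a) set \<Rightarrow> 'a set \<Rightarrow> bool" where
  "binary_level1 V A X \<longleftrightarrow>
     binary_network V A X \<and>
     (\<forall>S. bicomponent V A S \<longrightarrow> card {v \<in> S. hybrid_vertex A v} \<le> 1) \<and>
     no_short_cycle A"

definition gall :: "'a set \<Rightarrow> ('a \<times> 'a) set \<Rightarrow> 'a set \<Rightarrow> bool" where
  "gall V A S \<longleftrightarrow> bicomponent V A S \<and> card {(u, v) \<in> A. u \<in> S \<and> v \<in> S} > 1"

definition proper_network :: "'a set \<Rightarrow> ('a \<times> 'a) set \<Rightarrow> bool" where
  "proper_network V A \<longleftrightarrow> (\<exists>v\<in>V. hybrid_vertex A v)"

definition simple_network :: "'a set \<Rightarrow> ('a \<times> 'a) set \<Rightarrow> 'a set \<Rightarrow> bool" where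
  "simple_network V A X \<longleftrightarrow> binary_level1 V A X \<and>
     (\<exists>G. gall V A G \<and> (\<forall>G'. gall V A G' \<longrightarrow> G' = G) \<and>
          (\<forall>x\<in>X. \<exists>g\<in>G. (g, x) \<in> A \<or> (x, g) \<in> A))"

end

theory Submission
  imports Defs
begin

text \<open>Let \<open>h\<close> be the number of hybrid vertices and \<open>t\<close> the number of tree vertices (the root and
  the split vertices). Counting arcs by their tails and by their heads gives
  \<open>|A| = 2t + h = (t - 1) + 2h + n\<close>, hence \<open>t = n + h - 1\<close>, \<open>|V| = 2n + 2h - 1\<close> and
  \<open>|A| = 2n + 3h - 2\<close>. The two parents of a hybrid descend from their lowest common ancestor
  along disjoint paths, so every hybrid lies on a cycle. The vertex set of that cycle is
  biconnected, so it contains no leaf and, by level 1, no other hybrid; it has at least four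
  vertices since there are no triangles; and as all degrees are at most three, the cycles of
  distinct hybrids are vertex-disjoint. Thus \<open>3h \<le> t\<close>, i.e. \<open>2h + 1 \<le> n\<close>, and the bounds follow
  from \<open>1 \<le> h \<le> (n - 1) / 2\<close>. For \<open>n = 3\<close> this forces \<open>h = 1\<close> and four non-leaves, which then
  form the only gall.\<close>

definition uadj :: "('a \<times> 'a) set \<Rightarrow> 'a \<Rightarrow> 'a \<Rightarrow> bool" where
  "uadj A u v \<longleftrightarrow> (u, v) \<in> A \<or> (v, u) \<in> A"

lemma uedges_on_iff: "(u, v) \<in> uedges_on A S \<longleftrightarrow> u \<in> S \<and> v \<in> S \<and> uadj A u v"
  by (auto simp: uedges_on_def uadj_def)

lemma uedges_on_mono: "S \<subseteq> T \<Longrightarrow> uedges_on A S \<subseteq> uedges_on A T"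
  by (auto simp: uedges_on_def)

lemma uedges_on_rtrancl_sym: "(u, v) \<in> (uedges_on A S)\<^sup>* \<Longrightarrow> (v, u) \<in> (uedges_on A S)\<^sup>*"
proof -
  have "(uedges_on A S)\<inverse> = uedges_on A S" by (auto simp: uedges_on_def)
  then show "(u, v) \<in> (uedges_on A S)\<^sup>* \<Longrightarrow> (v, u) \<in> (uedges_on A S)\<^sup>*"
    by (metis rtrancl_converseI)
qed

lemma uconnected_onI:
  assumes "c \<in> S" "\<forall>z\<in>S. (c, z) \<in> (uedges_on A S)\<^sup>*"
  shows "uconnected_on A S"
  unfolding uconnected_on_def
  using assms by (meson empty_iff rtrancl_trans uedges_on_rtrancl_sym)

lemma uconnected_on_Un:
  assumes "uconnected_on A S1" "uconnected_on A S2" "c \<in> S1" "c \<in> S2"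
  shows "uconnected_on A (S1 \<union> S2)"
proof (rule uconnected_onI[of c])
  show "c \<in> S1 \<union> S2" using assms by auto
  have "(uedges_on A S1)\<^sup>* \<subseteq> (uedges_on A (S1 \<union> S2))\<^sup>*"
       "(uedges_on A S2)\<^sup>* \<subseteq> (uedges_on A (S1 \<union> S2))\<^sup>*"
    by (intro rtrancl_mono uedges_on_mono; auto)+
  then show "\<forall>z\<in>S1 \<union> S2. (c, z) \<in> (uedges_on A (S1 \<union> S2))\<^sup>*"
    using assms unfolding uconnected_on_def by blast
qed

text \<open>After deleting any vertex, the two remaining parts still share a vertex.\<close>
lemma ubiconnected_Un:
  assumes "ubiconnected V A S1" "ubiconnected V A S2"
    and "a \<in> S1" "a \<in> S2" "b \<in> S1" "b \<in> S2" "a \<noteq> b"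
  shows "ubiconnected V A (S1 \<union> S2)"
  unfolding ubiconnected_def
proof (intro conjI ballI)
  show "S1 \<union> S2 \<subseteq> V" "finite (S1 \<union> S2)" using assms unfolding ubiconnected_def by auto
  show "2 \<le> card (S1 \<union> S2)" using assms unfolding ubiconnected_def
    by (meson card_mono finite_Un le_trans sup_ge1)
  show "uconnected_on A (S1 \<union> S2)"
    using assms unfolding ubiconnected_def by (intro uconnected_on_Un[of _ _ _ a]) auto
  fix x
  have "uconnected_on A (S1 - {x})" "uconnected_on A (S2 - {x})"
    using assms unfolding ubiconnected_def by (cases "x \<in> S1"; cases "x \<in> S2"; auto)+
  moreover obtain c where "c \<in> S1 - {x}" "c \<in> S2 - {x}" using assms by (cases "x = a") auto
  ultimately have "uconnected_on A ((S1 - {x}) \<union> (S2 - {x}))" by (intro uconnected_on_Un[of _ _ _ c])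
  then show "uconnected_on A (S1 \<union> S2 - {x})" by (simp add: Un_Diff)
qed

lemma card_arcs_eq_sum_outdeg:
  assumes "finite V" "A \<subseteq> V \<times> V"
  shows "card A = (\<Sum>v\<in>V. outdeg A v)"
proof -
  have "A = (SIGMA v:V. {w. (v, w) \<in> A})" using assms by auto
  then have "card A = card (SIGMA v:V. {w. (v, w) \<in> A})" by simp
  also have "\<dots> = (\<Sum>v\<in>V. outdeg A v)"
    unfolding outdeg_def using assms by (intro card_SigmaI) (auto intro: finite_subset[of _ V])
  finally show ?thesis .
qed

lemma card_arcs_eq_sum_indeg:
  assumes "finite V" "A \<subseteq> V \<times> V"
  shows "card A = (\<Sum>v\<in>V. indeg A v)"
proof -
  have "card A = card (A\<inverse>)" by simp
  also have "\<dots> = (\<Sum>v\<in>V. outdeg (A\<inverse>) v)"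
    using assms by (intro card_arcs_eq_sum_outdeg) auto
  finally show ?thesis unfolding outdeg_def indeg_def by simp
qed

fun dipath :: "('a \<times> 'a) set \<Rightarrow> 'a list \<Rightarrow> bool" where
  "dipath A [] = True"
| "dipath A [x] = True"
| "dipath A (x # y # zs) \<longleftrightarrow> (x, y) \<in> A \<and> dipath A (y # zs)"

lemma dipath_append:
  "dipath A (xs @ ys) \<longleftrightarrow>
     dipath A xs \<and> dipath A ys \<and> (xs \<noteq> [] \<longrightarrow> ys \<noteq> [] \<longrightarrow> (last xs, hd ys) \<in> A)"
proof (induction xs)
  case (Cons x xs)
  then show ?case by (cases xs; cases ys) auto
qed simp

lemma dipath_ConsD: "dipath A (x # xs) \<Longrightarrow> dipath A xs"
  by (cases xs) auto

lemma dipath_rtrancl_hd: "dipath A xs \<Longrightarrow> z \<in> set xs \<Longrightarrow> (hd xs, z) \<in> A\<^sup>*"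
  by (induction A xs rule: dipath.induct) (auto intro: converse_rtrancl_into_rtrancl)

lemma dipath_rtrancl_last: "dipath A xs \<Longrightarrow> z \<in> set xs \<Longrightarrow> (z, last xs) \<in> A\<^sup>*"
  by (induction A xs arbitrary: z rule: dipath.induct) (auto intro: converse_rtrancl_into_rtrancl)

lemma dipath_nth_trancl:
  "dipath A xs \<Longrightarrow> i < j \<Longrightarrow> j < length xs \<Longrightarrow> (xs ! i, xs ! j) \<in> A\<^sup>+"
proof (induction A xs arbitrary: i j rule: dipath.induct)
  case (3 A x y zs)
  then obtain j' where j: "j = Suc j'" by (cases j) auto
  show ?case
  proof (cases i)
    case 0
    show ?thesis
    proof (cases j')
      case (Suc j'')
      then have "(y, (y # zs) ! j') \<in> A\<^sup>+" using 3 j "3.IH"[of 0 j'] by simp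
      then show ?thesis using 3 0 j by (auto intro: trancl_into_trancl2)
    qed (use 3 0 j in auto)
  next
    case (Suc i')
    then show ?thesis using 3 j by auto
  qed
qed auto

lemma dipath_distinct: "acyclic A \<Longrightarrow> dipath A xs \<Longrightarrow> distinct xs"
  unfolding distinct_conv_nth acyclic_def
  by (metis dipath_nth_trancl linorder_neqE_nat)

lemma rtrancl_imp_dipath:
  "(x, y) \<in> A\<^sup>* \<Longrightarrow> \<exists>xs. dipath A xs \<and> xs \<noteq> [] \<and> hd xs = x \<and> last xs = y"
proof (induction rule: converse_rtrancl_induct)
  case base
  show ?case by (intro exI[of _ "[y]"]) auto
next
  case (step x x')
  then obtain xs where "dipath A xs" "xs \<noteq> []" "hd xs = x'" "last xs = y" by blast
  then show ?case using step by (intro exI[of _ "x # xs"]) (cases xs; auto)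
qed

lemma dipath_uconnected: "dipath A xs \<Longrightarrow> xs \<noteq> [] \<Longrightarrow> uconnected_on A (set xs)"
proof (rule uconnected_onI[of "hd xs"])
  have "z \<in> set xs \<Longrightarrow> (hd xs, z) \<in> (uedges_on A (set ys))\<^sup>*"
    if "dipath A xs" "xs \<noteq> []" "set xs \<subseteq> set ys" for xs ys z
    using that
  proof (induction A xs rule: dipath.induct)
    case (3 A x y zs)
    then have "(x, y) \<in> uedges_on A (set ys)" by (auto simp: uedges_on_iff uadj_def)
    then show ?case using 3 by (cases "z = x") (auto intro: converse_rtrancl_into_rtrancl)
  qed auto
  then show "dipath A xs \<Longrightarrow> xs \<noteq> [] \<Longrightarrow> \<forall>z\<in>set xs. (hd xs, z) \<in> (uedges_on A (set xs))\<^sup>*"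
    by blast
qed simp

lemma dipaths_meeting_uconnected:
  assumes "dipath A P" "dipath A Q" "c \<in> set P" "c \<in> set Q"
  shows "uconnected_on A (set P \<union> set Q)"
  using assms by (intro uconnected_on_Un[of _ _ _ c] dipath_uconnected) auto

lemma dipath_cycle_Diff_inner_uconnected:
  assumes P: "dipath A P" "distinct P" and Q: "dipath A Q"
    and ends: "hd P \<in> set Q" "last P \<in> set Q"
    and x: "x \<in> set P" "x \<noteq> hd P" "x \<noteq> last P" "x \<notin> set Q"
  shows "uconnected_on A (set P \<union> set Q - {x})"
proof -
  obtain L R where PLR: "P = L @ x # R" using split_list[OF x(1)] by blast
  have "L \<noteq> []" using PLR x(2) by auto
  then have hdL: "hd P \<in> set L" using PLR by simp
  have "R \<noteq> []" using PLR x(3) by auto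
  then have lastR: "last P \<in> set R" using PLR by simp
  have paths: "dipath A L" "dipath A R"
    using P(1) dipath_ConsD[of A x R] unfolding PLR dipath_append by auto
  have "x \<notin> set L" "x \<notin> set R" using P(2) PLR by auto
  then have "set P \<union> set Q - {x} = (set L \<union> set Q) \<union> set R" using PLR x(4) by auto
  moreover have "uconnected_on A (set L \<union> set Q)"
    using paths Q ends hdL by (intro dipaths_meeting_uconnected) auto
  ultimately show ?thesis
    using paths dipath_uconnected[of A R] lastR ends \<open>R \<noteq> []\<close>
    by (metis UnI2 uconnected_on_Un)
qed

lemma dipath_cycle_Diff_uconnected:
  assumes P: "dipath A P" "distinct P" "P \<noteq> []" and Q: "dipath A Q" "distinct Q" "Q \<noteq> []"
    and hd: "hd P = a" "hd Q = a" and last: "last P = b" "last Q = b"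
    and "a \<noteq> b" and meet: "set P \<inter> set Q = {a, b}"
    and x: "x \<in> set P \<union> set Q"
  shows "uconnected_on A (set P \<union> set Q - {x})"
proof -
  have ab: "a \<in> set P" "a \<in> set Q" "b \<in> set P" "b \<in> set Q" using meet by auto
  consider "x = a" | "x = b" | "x \<noteq> a" "x \<noteq> b" "x \<in> set P" | "x \<noteq> a" "x \<noteq> b" "x \<in> set Q"
    using x by blast
  then show ?thesis
  proof cases
    case 1
    obtain P' Q' where PQ: "P = a # P'" "Q = a # Q'" using P(3) Q(3) hd list.collapse by metis
    then have "set P \<union> set Q - {x} = set P' \<union> set Q'" "b \<in> set P'" "b \<in> set Q'"
      using 1 P(2) Q(2) ab \<open>a \<noteq> b\<close> by auto
    moreover have "dipath A P'" "dipath A Q'"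
      using P(1) Q(1) dipath_ConsD[of A a P'] dipath_ConsD[of A a Q'] unfolding PQ by simp_all
    ultimately show ?thesis using dipaths_meeting_uconnected[of A P' Q' b] by simp
  next
    case 2
    obtain P' Q' where PQ: "P = P' @ [b]" "Q = Q' @ [b]"
      using P(3) Q(3) last append_butlast_last_id by metis
    then have "set P \<union> set Q - {x} = set P' \<union> set Q'" "a \<in> set P'" "a \<in> set Q'"
      using 2 P(2) Q(2) ab \<open>a \<noteq> b\<close> by auto
    moreover have "dipath A P'" "dipath A Q'" using P(1) Q(1) PQ by (simp_all add: dipath_append)
    ultimately show ?thesis using dipaths_meeting_uconnected[of A P' Q' a] by simp
  next
    case 3
    moreover have "x \<notin> set Q" using 3 meet by blast
    ultimately show ?thesis
      using dipath_cycle_Diff_inner_uconnected[OF P(1,2) Q(1)] hd last ab by simp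
  next
    case 4
    moreover have "x \<notin> set P" using 4 meet by blast
    ultimately have "uconnected_on A (set Q \<union> set P - {x})"
      using dipath_cycle_Diff_inner_uconnected[OF Q(1,2) P(1)] hd last ab by simp
    then show ?thesis by (simp add: Un_commute)
  qed
qed

lemma lowest_common_ancestor_dipaths:
  assumes "finite A" "acyclic A" "(c, p) \<in> A\<^sup>*" "(c, q) \<in> A\<^sup>*"
  obtains w P Q where "dipath A P" "P \<noteq> []" "hd P = w" "last P = p"
    "dipath A Q" "Q \<noteq> []" "hd Q = w" "last Q = q" "set P \<inter> set Q = {w}"
proof -
  define ancestors where "ancestors = {w. (w, p) \<in> A\<^sup>* \<and> (w, q) \<in> A\<^sup>*}"
  have "wf (A\<inverse>)" using assms(1,2) by (rule finite_acyclic_wf_converse)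
  moreover have "c \<in> ancestors" using assms(3,4) unfolding ancestors_def by simp
  ultimately obtain w where w: "w \<in> ancestors" and "\<And>y. (y, w) \<in> A\<inverse> \<Longrightarrow> y \<notin> ancestors"
    by (rule wfE_min) blast
  then have lowest: "\<And>y. (w, y) \<in> A \<Longrightarrow> y \<notin> ancestors" by blast
  have wpq: "(w, p) \<in> A\<^sup>*" "(w, q) \<in> A\<^sup>*" using w unfolding ancestors_def by simp_all
  obtain P where P: "dipath A P" "P \<noteq> []" "hd P = w" "last P = p"
    using rtrancl_imp_dipath[OF wpq(1)] by blast
  obtain Q where Q: "dipath A Q" "Q \<noteq> []" "hd Q = w" "last Q = q"
    using rtrancl_imp_dipath[OF wpq(2)] by blast
  have "z = w" if z: "z \<in> set P" "z \<in> set Q" for z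
  proof (rule ccontr)
    assume "z \<noteq> w"
    moreover have "(w, z) \<in> A\<^sup>*" using dipath_rtrancl_hd[OF P(1) z(1)] P(3) by simp
    ultimately obtain y where y: "(w, y) \<in> A" "(y, z) \<in> A\<^sup>*"
      by (blast elim: converse_rtranclE)
    have "(z, p) \<in> A\<^sup>*" "(z, q) \<in> A\<^sup>*"
      using dipath_rtrancl_last[OF P(1) z(1)] dipath_rtrancl_last[OF Q(1) z(2)] P(4) Q(4) by simp_all
    then have "y \<in> ancestors" using rtrancl_trans[OF y(2)] unfolding ancestors_def by blast
    then show False using lowest y(1) by blast
  qed
  moreover have "w \<in> set P" "w \<in> set Q" using hd_in_set[OF P(2)] hd_in_set[OF Q(2)] P(3) Q(3) by simp_all
  ultimately have "set P \<inter> set Q = {w}" by blast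
  then show thesis by (rule that[OF P Q])
qed

locale binary_level1_network =
  fixes V :: "'a set" and A :: "('a \<times> 'a) set" and X :: "'a set"
  assumes binary_level1: "binary_level1 V A X"
begin

lemma binary_network: "binary_network V A X"
  using binary_level1 unfolding binary_level1_def by simp

lemma phylo_network: "phylo_network V A X"
  using binary_network unfolding binary_network_def by simp

lemma finite_V: "finite V" and arcs_subset: "A \<subseteq> V \<times> V" and acyclic_A: "acyclic A"
  using phylo_network unfolding phylo_network_def dag_def acyclic_def by auto

lemma finite_A: "finite A"
  using finite_V arcs_subset by (metis finite_SigmaI finite_subset)

lemma arc_in_V: "(u, v) \<in> A \<Longrightarrow> u \<in> V \<and> v \<in> V"
  using arcs_subset by auto

lemma no_self_arc: "(u, u) \<notin> A"
  using acyclic_A by (auto simp: acyclic_def)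

lemma no_antiparallel_arcs: "(u, v) \<in> A \<Longrightarrow> (v, u) \<notin> A"
  using acyclic_A unfolding acyclic_def by (meson r_into_trancl trancl_trans)

lemma leaves_eq: "X = leaves V A"
  using phylo_network unfolding phylo_network_def by simp

lemma leaves_subset: "X \<subseteq> V"
  using leaves_eq unfolding leaves_def by auto

lemma finite_X: "finite X"
  using finite_V leaves_subset by (rule finite_subset[rotated])

lemma leaf_degrees: "x \<in> X \<Longrightarrow> indeg A x = 1 \<and> outdeg A x = 0"
  using leaves_eq unfolding leaves_def by auto

lemma finite_children: "finite {w. (v, w) \<in> A}"
  by (rule finite_subset[OF _ finite_V]) (auto dest: arc_in_V)

lemma leaf_has_no_child: "x \<in> X \<Longrightarrow> (x, w) \<notin> A"
  using leaf_degrees[of x] card_0_eq[OF finite_children[of x]] unfolding outdeg_def by blast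

lemma leaf_parent:
  assumes "x \<in> X" obtains p where "{u. (u, x) \<in> A} = {p}"
proof -
  have "card {u. (u, x) \<in> A} = 1" using leaf_degrees[OF assms] unfolding indeg_def by simp
  then show thesis using that by (auto simp: card_1_singleton_iff)
qed

definition root :: 'a where
  "root = (THE r. is_root V A r)"

lemma root_is_root: "is_root V A root"
  unfolding root_def using phylo_network unfolding phylo_network_def by (metis theI')

lemma root_unique: "is_root V A u \<Longrightarrow> u = root"
  using root_is_root phylo_network unfolding phylo_network_def by auto

lemma root_in_V: "root \<in> V" and indeg_root: "indeg A root = 0"
  using root_is_root unfolding is_root_def by auto

lemma degree_cases:
  assumes "v \<in> V"
  obtains "v = root" "indeg A v = 0" "outdeg A v = 2"
    | "v \<in> X" "indeg A v = 1" "outdeg A v = 0"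
    | "v \<noteq> root" "v \<notin> X" "\<not> hybrid_vertex A v" "indeg A v = 1" "outdeg A v = 2"
    | "hybrid_vertex A v" "indeg A v = 2" "outdeg A v = 1"
proof -
  have kinds: "is_root V A v \<or> v \<in> X \<or> split_vertex A v \<or> hybrid_vertex A v"
    using phylo_network assms unfolding phylo_network_def by auto
  have degrees: "(is_root V A v \<longrightarrow> outdeg A v = 2) \<and> (split_vertex A v \<longrightarrow> outdeg A v = 2) \<and>
      (hybrid_vertex A v \<longrightarrow> indeg A v = 2 \<and> outdeg A v = 1)"
    using binary_network assms unfolding binary_network_def by auto
  consider "is_root V A v" | "\<not> is_root V A v" "v \<in> X" | "\<not> is_root V A v" "v \<notin> X" "hybrid_vertex A v"
    | "\<not> is_root V A v" "v \<notin> X" "\<not> hybrid_vertex A v" by blast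
  then show thesis
  proof cases
    case 1
    then have "v = root" by (rule root_unique)
    then show thesis using degrees indeg_root 1 by (intro that(1)) auto
  next
    case 2
    then show thesis using leaf_degrees by (intro that(2)) auto
  next
    case 3
    then show thesis using degrees by (intro that(4)) auto
  next
    case 4
    then have "split_vertex A v" "v \<noteq> root" using kinds root_is_root by auto
    then show thesis using 4 degrees unfolding split_vertex_def by (intro that(3)) auto
  qed
qed

lemma neighbours_card_le_3: "v \<in> V \<Longrightarrow> card {u. uadj A v u} \<le> 3"
proof -
  assume v: "v \<in> V"
  have "{u. uadj A v u} = {u. (u, v) \<in> A} \<union> {u. (v, u) \<in> A}" unfolding uadj_def by auto
  then have "card {u. uadj A v u} \<le> indeg A v + outdeg A v"
    unfolding indeg_def outdeg_def by (metis card_Un_le)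
  then show ?thesis by (cases rule: degree_cases[OF v]) auto
qed

lemma finite_neighbours: "finite {u. uadj A v u}"
  unfolding uadj_def by (rule finite_subset[OF _ finite_V]) (auto dest: arc_in_V)

lemma root_reaches: "u \<in> V \<Longrightarrow> (root, u) \<in> A\<^sup>*"
proof (induction u rule: wf_induct_rule[OF finite_acyclic_wf[OF finite_A acyclic_A]])
  case (1 u)
  show ?case
  proof (cases "u = root")
    case False
    then have "indeg A u \<noteq> 0" by (cases rule: degree_cases[OF "1.prems"]) auto
    then obtain p where p: "(p, u) \<in> A" unfolding indeg_def by fastforce
    then have "(root, p) \<in> A\<^sup>*" using 1 arc_in_V by blast
    then show ?thesis using p by (rule rtrancl_into_rtrancl)
  qed simp
qed

lemma rtrancl_in_V: "(z, y) \<in> A\<^sup>* \<Longrightarrow> y \<in> V \<Longrightarrow> z \<in> V"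
  by (erule converse_rtranclE) (auto dest: arc_in_V)

lemma ubiconnected_two_neighbours:
  assumes S: "ubiconnected V A S" "card S \<ge> 3" and u: "u \<in> S"
  obtains y1 y2 where "y1 \<in> S" "y2 \<in> S" "y1 \<noteq> y2" "y1 \<noteq> u" "y2 \<noteq> u" "uadj A u y1" "uadj A u y2"
proof -
  have conn: "uconnected_on A S" and conn_Diff: "\<And>x. x \<in> S \<Longrightarrow> uconnected_on A (S - {x})"
    using S unfolding ubiconnected_def by auto
  have "\<not> S \<subseteq> {u}" using S(2) card_mono[of "{u}" S] by fastforce
  then obtain z where z: "z \<in> S" "z \<noteq> u" by auto
  have "(u, z) \<in> (uedges_on A S)\<^sup>*" using conn u z unfolding uconnected_on_def by auto
  then obtain c where "(u, c) \<in> uedges_on A S"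
    using z(2) by (blast elim: converse_rtranclE)
  then have c: "c \<in> S" "uadj A u c" "c \<noteq> u"
    using no_self_arc by (auto simp: uedges_on_iff uadj_def)
  have "card {u, c} \<le> 2" by (simp add: card_insert_if)
  then have "\<not> S \<subseteq> {u, c}" using S(2) card_mono[of "{u, c}" S] by fastforce
  then obtain z' where z': "z' \<in> S" "z' \<noteq> u" "z' \<noteq> c" by auto
  have "(u, z') \<in> (uedges_on A (S - {c}))\<^sup>*"
    using conn_Diff[OF c(1)] u z' c(3) unfolding uconnected_on_def by auto
  then obtain d where "(u, d) \<in> uedges_on A (S - {c})"
    using z'(2) by (blast elim: converse_rtranclE)
  then have d: "d \<in> S" "d \<noteq> c" "uadj A u d" "d \<noteq> u"
    using no_self_arc by (auto simp: uedges_on_iff uadj_def)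
  show thesis using that c d by blast
qed

lemma ubiconnected_no_leaf:
  assumes S: "ubiconnected V A S" "card S \<ge> 3" and x: "x \<in> S"
  shows "x \<notin> X"
proof
  assume "x \<in> X"
  then obtain p where "{u. (u, x) \<in> A} = {p}" by (rule leaf_parent)
  then have "\<And>y. uadj A x y \<Longrightarrow> y = p"
    using leaf_has_no_child[OF \<open>x \<in> X\<close>] unfolding uadj_def by auto
  then show False using ubiconnected_two_neighbours[OF S x] by metis
qed

lemma ubiconnected_card_ge_4:
  assumes S: "ubiconnected V A S" "card S \<ge> 3"
  shows "card S \<ge> 4"
proof (rule ccontr)
  assume "\<not> card S \<ge> 4"
  then have card_S: "card S = 3" using S(2) by simp
  then obtain a where a: "a \<in> S" by fastforce
  obtain y1 y2 where y: "y1 \<in> S" "y2 \<in> S" "y1 \<noteq> y2" "y1 \<noteq> a" "y2 \<noteq> a" "uadj A a y1" "uadj A a y2"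
    using ubiconnected_two_neighbours[OF S a] by blast
  have "card {a, y1, y2} = 3" using y by auto
  then have S_eq: "S = {a, y1, y2}"
    using a y card_S S(1) card_subset_eq[of S "{a, y1, y2}"] unfolding ubiconnected_def by auto
  obtain z1 z2 where "z1 \<in> S" "z2 \<in> S" "z1 \<noteq> z2" "z1 \<noteq> y1" "z2 \<noteq> y1" "uadj A y1 z1" "uadj A y1 z2"
    using ubiconnected_two_neighbours[OF S y(1)] by blast
  then have "uadj A y1 y2" using S_eq by auto
  then show False
    using binary_level1 y unfolding binary_level1_def no_short_cycle_def uedges_on_def uadj_def
    by blast
qed

lemma ubiconnected_in_bicomponent:
  assumes "ubiconnected V A S"
  obtains T where "bicomponent V A T" "S \<subseteq> T"
proof -
  let ?P = "\<lambda>T. ubiconnected V A T \<and> S \<subseteq> T"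
  have "\<forall>T. ?P T \<longrightarrow> card T < Suc (card V)"
    using finite_V unfolding ubiconnected_def by (auto intro: card_mono le_imp_less_Suc)
  then obtain T where T: "?P T" and largest: "\<forall>T'. ?P T' \<longrightarrow> card T' \<le> card T"
    using ex_has_greatest_nat[of ?P S card "Suc (card V)"] assms by blast
  have "bicomponent V A T"
    unfolding bicomponent_def
  proof (intro conjI allI impI)
    show "ubiconnected V A T" using T by simp
    fix T' assume T': "ubiconnected V A T' \<and> T \<subseteq> T'"
    then have "card T' \<le> card T" using T largest by blast
    then show "T' = T" using T' card_seteq[of T' T] unfolding ubiconnected_def by auto
  qed
  then show thesis using that T by blast
qed

lemma ubiconnected_hybrid_unique:
  assumes "ubiconnected V A S" "v \<in> S" "w \<in> S" "hybrid_vertex A v" "hybrid_vertex A w"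
  shows "v = w"
proof -
  obtain T where T: "bicomponent V A T" "S \<subseteq> T" using assms(1) by (rule ubiconnected_in_bicomponent)
  have "finite {x\<in>T. hybrid_vertex A x}" using T unfolding bicomponent_def ubiconnected_def by simp
  moreover have "card {x\<in>T. hybrid_vertex A x} \<le> 1"
    using binary_level1 T unfolding binary_level1_def by blast
  ultimately show ?thesis using assms T by (auto simp: card_le_Suc0_iff_eq)
qed

lemma hybrid_cycle:
  assumes v: "v \<in> V" "hybrid_vertex A v"
  obtains B p1 p2 where "ubiconnected V A B" "card B \<ge> 3" "v \<in> B" "p1 \<in> B" "p2 \<in> B"
    "p1 \<noteq> p2" "(p1, v) \<in> A" "(p2, v) \<in> A"
proof -
  have "indeg A v = 2" using v by (cases rule: degree_cases[OF v(1)]) (auto simp: hybrid_vertex_def)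
  then obtain p1 p2 where "{u. (u, v) \<in> A} = {p1, p2}" "p1 \<noteq> p2"
    unfolding indeg_def by (auto simp: card_2_iff)
  then have arcs: "(p1, v) \<in> A" "(p2, v) \<in> A" and "p1 \<noteq> p2" by auto
  then have "p1 \<in> V" "p2 \<in> V" using arc_in_V by auto
  then obtain w P Q where P: "dipath A P" "P \<noteq> []" "hd P = w" "last P = p1"
    and Q: "dipath A Q" "Q \<noteq> []" "hd Q = w" "last Q = p2" and meet: "set P \<inter> set Q = {w}"
    using lowest_common_ancestor_dipaths[OF finite_A acyclic_A root_reaches root_reaches] by metis
  define P' Q' where "P' = P @ [v]" and "Q' = Q @ [v]"
  have paths: "dipath A P'" "dipath A Q'" unfolding P'_def Q'_def using P Q arcs by (simp_all add: dipath_append)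
  have "v \<notin> set P" "v \<notin> set Q"
    using dipath_rtrancl_last[OF P(1)] dipath_rtrancl_last[OF Q(1)] P(4) Q(4) arcs acyclic_A
    unfolding acyclic_def by (meson rtrancl_into_trancl1)+
  moreover have "w \<in> set P" using P(2,3) hd_in_set by blast
  ultimately have "w \<noteq> v" "set P' \<inter> set Q' = {w, v}" using meet unfolding P'_def Q'_def by auto
  moreover have "distinct P'" "distinct Q'" using dipath_distinct[OF acyclic_A] paths by auto
  moreover have "hd P' = w" "hd Q' = w" "last P' = v" "last Q' = v"
    unfolding P'_def Q'_def using P Q by simp_all
  ultimately have cycle_Diff: "\<forall>x\<in>set P' \<union> set Q'. uconnected_on A (set P' \<union> set Q' - {x})"
    using dipath_cycle_Diff_uconnected[OF paths(1) _ _ paths(2)] unfolding P'_def Q'_def by simp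
  define B where "B = set P' \<union> set Q'"
  have in_B: "v \<in> B" "p1 \<in> B" "p2 \<in> B"
    unfolding B_def P'_def Q'_def using P(2,4) Q(2,4) last_in_set by fastforce+
  have "B \<subseteq> V"
    using rtrancl_in_V dipath_rtrancl_last[OF P(1)] dipath_rtrancl_last[OF Q(1)] P(4) Q(4)
      \<open>p1 \<in> V\<close> \<open>p2 \<in> V\<close> v(1) unfolding B_def P'_def Q'_def by auto
  then have "finite B" using finite_V finite_subset by blast
  moreover have "p1 \<noteq> v" "p2 \<noteq> v" using arcs no_self_arc by auto
  then have "card {p1, p2, v} = 3" using \<open>p1 \<noteq> p2\<close> by simp
  ultimately have "card B \<ge> 3" using in_B card_mono[of B "{p1, p2, v}"] by force
  moreover have "uconnected_on A B"
    unfolding B_def using dipaths_meeting_uconnected[OF paths, of v] unfolding P'_def Q'_def by simp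
  ultimately have "ubiconnected V A B"
    using \<open>B \<subseteq> V\<close> \<open>finite B\<close> cycle_Diff unfolding ubiconnected_def B_def by auto
  then show thesis using that \<open>card B \<ge> 3\<close> in_B \<open>p1 \<noteq> p2\<close> arcs by blast
qed

definition hybrids :: "'a set" where
  "hybrids = {v \<in> V. hybrid_vertex A v}"

definition tree_vertices :: "'a set" where
  "tree_vertices = V - X - hybrids"

text \<open>At a common vertex the two blocks would have four distinct neighbours unless they share
  a second vertex; then their union is biconnected and contains two hybrids.\<close>
lemma hybrid_blocks_disjoint:
  assumes B: "ubiconnected V A B" "card B \<ge> 3" and C: "ubiconnected V A C" "card C \<ge> 3"
    and hybrids: "v \<in> B" "w \<in> C" "hybrid_vertex A v" "hybrid_vertex A w" "v \<noteq> w"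
  shows "B \<inter> C = {}"
proof (rule ccontr)
  assume "B \<inter> C \<noteq> {}"
  then obtain u where u: "u \<in> B" "u \<in> C" by auto
  have "u \<in> V" using u(1) B(1) unfolding ubiconnected_def by auto
  obtain y1 y2 where y: "y1 \<in> B" "y2 \<in> B" "y1 \<noteq> y2" "y1 \<noteq> u" "y2 \<noteq> u" "uadj A u y1" "uadj A u y2"
    using ubiconnected_two_neighbours[OF B u(1)] by blast
  obtain z1 z2 where z: "z1 \<in> C" "z2 \<in> C" "z1 \<noteq> z2" "z1 \<noteq> u" "z2 \<noteq> u" "uadj A u z1" "uadj A u z2"
    using ubiconnected_two_neighbours[OF C u(2)] by blast
  obtain c where c: "c \<in> B" "c \<in> C" "c \<noteq> u"
  proof (rule ccontr)
    assume "\<not> thesis"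
    then have "y1 \<noteq> z1" "y1 \<noteq> z2" "y2 \<noteq> z1" "y2 \<noteq> z2" using that y z by metis+
    then have "card {y1, y2, z1, z2} = 4" using y(3) z(3) by simp
    moreover have "card {y1, y2, z1, z2} \<le> card {x. uadj A u x}"
      using y z finite_neighbours by (intro card_mono) auto
    ultimately show False using neighbours_card_le_3[OF \<open>u \<in> V\<close>] by simp
  qed
  have "ubiconnected V A (B \<union> C)" using ubiconnected_Un[OF B(1) C(1) u c(1,2)] c(3) by simp
  then show False using ubiconnected_hybrid_unique[of "B \<union> C" v w] hybrids by auto
qed

lemma card_tree_vertices_ge: "3 * card hybrids \<le> card tree_vertices"
proof -
  have "\<forall>v\<in>hybrids. \<exists>B. ubiconnected V A B \<and> card B \<ge> 3 \<and> v \<in> B"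
    unfolding hybrids_def by (blast elim: hybrid_cycle)
  then obtain B where B: "\<And>v. v \<in> hybrids \<Longrightarrow> ubiconnected V A (B v) \<and> card (B v) \<ge> 3 \<and> v \<in> B v"
    by metis
  then have finite_B: "\<And>v. v \<in> hybrids \<Longrightarrow> finite (B v)" unfolding ubiconnected_def by blast
  have "B v - {v} \<subseteq> tree_vertices" if v: "v \<in> hybrids" for v
  proof
    fix u assume u: "u \<in> B v - {v}"
    have "u \<notin> X" using ubiconnected_no_leaf B[OF v] u by blast
    moreover have "u \<notin> hybrids"
      using ubiconnected_hybrid_unique[of "B v" u v] B[OF v] u v unfolding hybrids_def by auto
    ultimately show "u \<in> tree_vertices" using B[OF v] u unfolding tree_vertices_def ubiconnected_def by auto
  qed
  then have "card (\<Union>v\<in>hybrids. B v - {v}) \<le> card tree_vertices"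
    using finite_V unfolding tree_vertices_def by (intro card_mono) auto
  moreover have "B v \<inter> B w = {}" if "v \<in> hybrids" "w \<in> hybrids" "v \<noteq> w" for v w
    using hybrid_blocks_disjoint[of "B v" "B w" v w] B[OF that(1)] B[OF that(2)] that
    unfolding hybrids_def by simp
  then have "card (\<Union>v\<in>hybrids. B v - {v}) = (\<Sum>v\<in>hybrids. card (B v - {v}))"
    using finite_V finite_B unfolding hybrids_def by (intro card_UN_disjoint) auto
  moreover have "3 \<le> card (B v - {v})" if "v \<in> hybrids" for v
    using ubiconnected_card_ge_4[of "B v"] B[OF that] finite_B[OF that] by simp
  then have "3 * card hybrids \<le> (\<Sum>v\<in>hybrids. card (B v - {v}))"
    using sum_mono[of hybrids "\<lambda>_. 3 :: nat"] by (simp add: mult.commute)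
  ultimately show ?thesis by linarith
qed

lemma proper_network_card_hybrids:
  assumes "proper_network V A" shows "card hybrids \<ge> 1"
proof -
  have "hybrids \<noteq> {}" using assms unfolding proper_network_def hybrids_def by blast
  moreover have "finite hybrids" using finite_V unfolding hybrids_def by simp
  ultimately show ?thesis by (simp add: Suc_le_eq card_gt_0_iff)
qed

lemma sum_V_split:
  fixes f :: "'a \<Rightarrow> nat"
  shows "sum f V = sum f tree_vertices + sum f hybrids + sum f X"
proof -
  have "hybrids \<subseteq> V - X" "X \<subseteq> V"
    using leaves_subset leaf_degrees unfolding hybrids_def hybrid_vertex_def by auto
  then show ?thesis
    using sum.subset_diff[of X V f] sum.subset_diff[of hybrids "V - X" f] finite_V
    unfolding tree_vertices_def by simp
qed

lemma tree_vertex_degrees: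
  assumes "v \<in> tree_vertices"
  shows "outdeg A v = 2 \<and> indeg A v = (if v = root then 0 else 1)"
proof -
  have "v \<in> V" "v \<notin> X" "\<not> hybrid_vertex A v"
    using assms unfolding tree_vertices_def hybrids_def by auto
  then show ?thesis by (cases rule: degree_cases[OF \<open>v \<in> V\<close>]) auto
qed

lemma hybrid_degrees: "v \<in> hybrids \<Longrightarrow> indeg A v = 2 \<and> outdeg A v = 1"
  unfolding hybrids_def by (auto elim: degree_cases simp: hybrid_vertex_def)

lemma root_in_tree_vertices: "root \<in> tree_vertices"
  using root_in_V indeg_root leaf_degrees unfolding tree_vertices_def hybrids_def hybrid_vertex_def
  by auto

lemma card_arcs: "card A = 2 * card tree_vertices + card hybrids"
  using card_arcs_eq_sum_outdeg[OF finite_V arcs_subset] sum_V_split[of "outdeg A"]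
    tree_vertex_degrees hybrid_degrees leaf_degrees by simp

lemma card_tree_vertices: "card tree_vertices + 1 = card X + card hybrids"
proof -
  have "finite tree_vertices" using finite_V unfolding tree_vertices_def by simp
  then have "sum (indeg A) tree_vertices = card tree_vertices - 1"
    using sum.remove[OF _ root_in_tree_vertices, of "indeg A"] tree_vertex_degrees
      root_in_tree_vertices card_Diff_singleton by simp
  then have "card A = card tree_vertices - 1 + 2 * card hybrids + card X"
    using card_arcs_eq_sum_indeg[OF finite_V arcs_subset] sum_V_split[of "indeg A"]
      hybrid_degrees leaf_degrees by simp
  moreover have "card tree_vertices \<ge> 1"
    using root_in_tree_vertices \<open>finite tree_vertices\<close> card_0_eq by fastforce
  ultimately show ?thesis using card_arcs by linarith
qed

lemma card_vertices: "card V = card tree_vertices + card hybrids + card X"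
  using sum_V_split[of "\<lambda>_. 1"] by simp

lemma gall_card_ge_3:
  assumes "gall V A G"
  shows "ubiconnected V A G" "card G \<ge> 3"
proof -
  show "ubiconnected V A G" using assms unfolding gall_def bicomponent_def by simp
  then have "card G \<ge> 2" unfolding ubiconnected_def by simp
  moreover have "card G \<noteq> 2"
  proof
    assume "card G = 2"
    then obtain a b where "G = {a, b}" by (auto simp: card_2_iff)
    then have "{(u, v) \<in> A. u \<in> G \<and> v \<in> G} \<subseteq> {(a, b)} \<or> {(u, v) \<in> A. u \<in> G \<and> v \<in> G} \<subseteq> {(b, a)}"
      using no_self_arc no_antiparallel_arcs by auto
    then obtain e where "{(u, v) \<in> A. u \<in> G \<and> v \<in> G} \<subseteq> {e}" by blast
    then have "card {(u, v) \<in> A. u \<in> G \<and> v \<in> G} \<le> card {e}" by (rule card_mono[rotated]) simp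
    then have "card {(u, v) \<in> A. u \<in> G \<and> v \<in> G} \<le> 1" by simp
    then show False using assms unfolding gall_def by simp
  qed
  ultimately show "card G \<ge> 3" by simp
qed

text \<open>With three leaves there are exactly four non-leaves, and every block with at
  least three vertices has at least four non-leaves, so it is the set of all non-leaves.\<close>
lemma simple_if_three_leaves:
  assumes "card X = 3" "proper_network V A"
  shows "simple_network V A X"
proof -
  have "card hybrids \<ge> 1" using assms(2) by (rule proper_network_card_hybrids)
  then have "card (V - X) = 4"
    using assms(1) card_tree_vertices card_tree_vertices_ge card_vertices leaves_subset finite_X
    by (simp add: card_Diff_subset)
  have block_eq: "S = V - X" if "ubiconnected V A S" "card S \<ge> 3" for S
  proof (rule card_seteq)
    show "S \<subseteq> V - X" using that ubiconnected_no_leaf[OF that] unfolding ubiconnected_def by blast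
    show "card (V - X) \<le> card S" using ubiconnected_card_ge_4[OF that] \<open>card (V - X) = 4\<close> by simp
  qed (use finite_V in simp)
  obtain v where "v \<in> V" "hybrid_vertex A v" using assms(2) unfolding proper_network_def by blast
  then obtain B p1 p2 where B: "ubiconnected V A B" "card B \<ge> 3" "v \<in> B" "p1 \<in> B" "p2 \<in> B"
      "p1 \<noteq> p2" "(p1, v) \<in> A" "(p2, v) \<in> A"
    by (rule hybrid_cycle)
  obtain T where T: "bicomponent V A T" "B \<subseteq> T" using B(1) by (rule ubiconnected_in_bicomponent)
  have "ubiconnected V A T" using T(1) unfolding bicomponent_def by simp
  moreover have "card B \<le> card T"
    using T(2) \<open>ubiconnected V A T\<close> unfolding ubiconnected_def by (intro card_mono) auto
  ultimately have "T = V - X" using block_eq B(2) by simp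
  have "{(p1, v), (p2, v)} \<subseteq> {(a, b) \<in> A. a \<in> T \<and> b \<in> T}" using B T(2) by auto
  then have "card {(p1, v), (p2, v)} \<le> card {(a, b) \<in> A. a \<in> T \<and> b \<in> T}"
    by (rule card_mono[rotated]) (rule finite_subset[OF _ finite_A], auto)
  then have "card {(a, b) \<in> A. a \<in> T \<and> b \<in> T} > 1" using B(6) by simp
  then have "gall V A T" unfolding gall_def using T(1) by simp
  moreover have "\<forall>G'. gall V A G' \<longrightarrow> G' = T"
    using gall_card_ge_3 block_eq \<open>T = V - X\<close> by blast
  moreover have "\<exists>g\<in>T. (g, x) \<in> A \<or> (x, g) \<in> A" if x: "x \<in> X" for x
  proof -
    obtain p where "{u. (u, x) \<in> A} = {p}" by (rule leaf_parent[OF x])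
    then have "(p, x) \<in> A" by blast
    then show ?thesis using leaf_has_no_child arc_in_V \<open>T = V - X\<close> by blast
  qed
  ultimately show ?thesis unfolding simple_network_def using binary_level1 by blast
qed

end

theorem mainTheorem1:
  fixes V :: "'a set" and A :: "('a \<times> 'a) set" and X :: "'a set" and n :: nat
  assumes "binary_level1 V A X"
    and "proper_network V A"
    and "n = card X"
    and "n \<ge> 3"
  shows "2 * n + 1 \<le> card V \<and> card V \<le> 3 * n - 2 \<and>
         2 * n + 1 \<le> card A \<and> real (card A) \<le> 3.5 * (real n - 1) \<and>
         (n = 3 \<longrightarrow> card V = 7 \<and> card A = 7 \<and> simple_network V A X)"
proof -
  interpret binary_level1_network V A X using assms(1) by unfold_locales
  have "card hybrids \<ge> 1" "card tree_vertices + 1 = n + card hybrids"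
    "3 * card hybrids \<le> card tree_vertices" "card V = card tree_vertices + card hybrids + n"
    "card A = 2 * card tree_vertices + card hybrids"
    using proper_network_card_hybrids[OF assms(2)] card_tree_vertices card_tree_vertices_ge
      card_vertices card_arcs assms(3) by simp_all
  then have "2 * n + 1 \<le> card V" "card V \<le> 3 * n - 2" "2 * n + 1 \<le> card A"
    "2 * card A + 7 \<le> 7 * n" "n = 3 \<Longrightarrow> card V = 7" "n = 3 \<Longrightarrow> card A = 7"
    by linarith+
  moreover have "real (2 * card A + 7) \<le> real (7 * n)"
    using \<open>2 * card A + 7 \<le> 7 * n\<close> by (simp only: of_nat_le_iff)
  then have "real (card A) \<le> 3.5 * (real n - 1)" by simp
  moreover have "n = 3 \<Longrightarrow> simple_network V A X"
    using simple_if_three_leaves assms(2,3) by simp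
  ultimately show ?thesis by blast
qed

end
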